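(* For every finite graph $G$, $\mathrm{lw}_{\chi(G)}(G)\leq \chi(G)$, where $\chi(G)$ is the chromatic number of $G$.
   Context: All graphs are finite, simple and undirected. For vertices $u,v$ of a connected graph, the interval $I(u,v)$ is the set of vertices lying on some shortest $(u,v)$-path. A set $S$ of vertices is (geodesically) convex if $I(u,v)\subseteq S$ for all $u,v\in S$. A graph $M$ is median if it is connected and for any three vertices $u,v,w$ we have $|I(u,v)\cap I(v,w)\cap I(w,u)|=1$. A median decomposition of a graph $G$ is a pair $(M,\mathcal{X})$ where $M$ is a median graph and $\mathcal{X}=(X_a)_{a\in V(M)}$ is a family of subsets of $V(G)$ (bags) such that (M1) for every edge $uv\in E(G)$ there is $a\in V(M)$ with $u,v\in X_a$, and (M2) for every $v\in V(G)$ the set $\{a\in V(M): v\in X_a\}$ is non-empty and convex in $M$. Its width is $\max_{a\in V(M)}|X_a|$. A $k$-lattice is a Cartesian product of $k$ (finite) paths. The lattice dimension of a graph $M$ is the least $k$ such that $M$ admits an isometric (distance-preserving) embedding into a $k$-lattice. For $i\geq1$, an $i$-lattice decomposition of $G$ is a median decomposition $(M,\mathcal{X})$ of $G$ with $M$ of lattice dimension at most $i$, and the $i$-latticewidth $\mathrm{lw}_i(G)$ is the minimum width of an $i$-lattice decomposition of $G$. *)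

theory Defs
  imports Main
begin

definition graph :: "'a set \<Rightarrow> ('a \<times> 'a) set \<Rightarrow> bool" where
  "graph V E \<longleftrightarrow> finite V \<and> E \<subseteq> V \<times> V \<and> sym E \<and> (\<forall>x. (x, x) \<notin> E)"

definition walk :: "'a set \<Rightarrow> ('a \<times> 'a) set \<Rightarrow> 'a list \<Rightarrow> bool" where
  "walk V E xs \<longleftrightarrow> xs \<noteq> [] \<and> set xs \<subseteq> V \<and>
     (\<forall>i. Suc i < length xs \<longrightarrow> (xs ! i, xs ! Suc i) \<in> E)"

definition walk_of_len :: "'a set \<Rightarrow> ('a \<times> 'a) set \<Rightarrow> 'a \<Rightarrow> 'a \<Rightarrow> nat \<Rightarrow> 'a list \<Rightarrow> bool" where
  "walk_of_len V E u v n xs \<longleftrightarrow> walk V E xs \<and> hd xs = u \<and> last xs = v \<and> length xs = Suc n"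

definition connected_graph :: "'a set \<Rightarrow> ('a \<times> 'a) set \<Rightarrow> bool" where
  "connected_graph V E \<longleftrightarrow> V \<noteq> {} \<and> (\<forall>u\<in>V. \<forall>v\<in>V. \<exists>n xs. walk_of_len V E u v n xs)"

definition gdist :: "'a set \<Rightarrow> ('a \<times> 'a) set \<Rightarrow> 'a \<Rightarrow> 'a \<Rightarrow> nat" where
  "gdist V E u v = (LEAST n. \<exists>xs. walk_of_len V E u v n xs)"

definition interval :: "'a set \<Rightarrow> ('a \<times> 'a) set \<Rightarrow> 'a \<Rightarrow> 'a \<Rightarrow> 'a set" where
  "interval V E u v = {w. \<exists>xs. walk_of_len V E u v (gdist V E u v) xs \<and> w \<in> set xs}"

definition convex_set :: "'a set \<Rightarrow> ('a \<times> 'a) set \<Rightarrow> 'a set \<Rightarrow> bool" where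
  "convex_set V E S \<longleftrightarrow> S \<subseteq> V \<and> (\<forall>u\<in>S. \<forall>v\<in>S. interval V E u v \<subseteq> S)"

definition median_graph :: "'a set \<Rightarrow> ('a \<times> 'a) set \<Rightarrow> bool" where
  "median_graph V E \<longleftrightarrow> connected_graph V E \<and>
     (\<forall>u\<in>V. \<forall>v\<in>V. \<forall>w\<in>V.
        card (interval V E u v \<inter> interval V E v w \<inter> interval V E w u) = 1)"

text \<open>The k-lattice: Cartesian product of the paths with ns!0, ..., ns!(k-1) vertices
  (k = length ns); vertices are coordinate lists, adjacent iff they differ by 1 in exactly one coordinate.\<close>
definition lattice_V :: "nat list \<Rightarrow> nat list set" where
  "lattice_V ns = {xs. length xs = length ns \<and> (\<forall>j<length ns. xs ! j < ns ! j)}"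

definition lattice_E :: "nat list \<Rightarrow> (nat list \<times> nat list) set" where
  "lattice_E ns = {(xs, ys). xs \<in> lattice_V ns \<and> ys \<in> lattice_V ns \<and>
     (\<exists>j<length ns. (xs ! j + 1 = ys ! j \<or> ys ! j + 1 = xs ! j) \<and>
        (\<forall>l<length ns. l \<noteq> j \<longrightarrow> xs ! l = ys ! l))}"

definition isometric_embedding_lattice :: "'b set \<Rightarrow> ('b \<times> 'b) set \<Rightarrow> nat list \<Rightarrow> ('b \<Rightarrow> nat list) \<Rightarrow> bool" where
  "isometric_embedding_lattice V E ns \<phi> \<longleftrightarrow> \<phi> ` V \<subseteq> lattice_V ns \<and>
     (\<forall>u\<in>V. \<forall>v\<in>V. gdist (lattice_V ns) (lattice_E ns) (\<phi> u) (\<phi> v) = gdist V E u v)"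

definition embeds_in_lattice :: "'b set \<Rightarrow> ('b \<times> 'b) set \<Rightarrow> nat \<Rightarrow> bool" where
  "embeds_in_lattice V E k \<longleftrightarrow>
     (\<exists>ns \<phi>. length ns = k \<and> (\<forall>j<k. ns ! j > 0) \<and> isometric_embedding_lattice V E ns \<phi>)"

definition lattice_dim_le :: "'b set \<Rightarrow> ('b \<times> 'b) set \<Rightarrow> nat \<Rightarrow> bool" where
  "lattice_dim_le V E i \<longleftrightarrow> (\<exists>k\<le>i. embeds_in_lattice V E k)"

definition median_decomposition ::
  "'a set \<Rightarrow> ('a \<times> 'a) set \<Rightarrow> nat set \<Rightarrow> (nat \<times> nat) set \<Rightarrow> (nat \<Rightarrow> 'a set) \<Rightarrow> bool" where
  "median_decomposition V E VM EM X \<longleftrightarrow>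
     graph VM EM \<and> median_graph VM EM \<and> (\<forall>a\<in>VM. X a \<subseteq> V) \<and>
     (\<forall>(u, v)\<in>E. \<exists>a\<in>VM. u \<in> X a \<and> v \<in> X a) \<and>
     (\<forall>v\<in>V. {a\<in>VM. v \<in> X a} \<noteq> {} \<and> convex_set VM EM {a\<in>VM. v \<in> X a})"

definition decomp_width :: "nat set \<Rightarrow> (nat \<Rightarrow> 'a set) \<Rightarrow> nat" where
  "decomp_width VM X = Max ((\<lambda>a. card (X a)) ` VM)"

definition latticewidth :: "nat \<Rightarrow> 'a set \<Rightarrow> ('a \<times> 'a) set \<Rightarrow> nat" where
  "latticewidth i V E = Inf {w. \<exists>VM EM X. median_decomposition V E VM EM X \<and>
      lattice_dim_le VM EM i \<and> w = decomp_width VM X}"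

definition chromatic_number :: "'a set \<Rightarrow> ('a \<times> 'a) set \<Rightarrow> nat" where
  "chromatic_number V E = (LEAST k. \<exists>c. c ` V \<subseteq> {..<k} \<and> (\<forall>(u, v)\<in>E. c u \<noteq> c v))"

end

theory Submission imports Defs "HOL-Library.Countable" begin

text \<open>Take a proper colouring c with k = \<chi>(G) colours and number the vertices of each colour
  class C_i as 0, \<dots>, |C_i| - 1. The host is the lattice \<Prod>_i P(|C_i|), and vertex v goes into
  the bag of every lattice point whose c(v)-th coordinate is the number of v. A point therefore
  meets each colour class at most once, so bags have at most k vertices. The points whose bag
  contains v form a coordinate slice, which is convex because lattice intervals are boxes, and
  the two ends of an edge have different colours, so a point can match both their numbers.
  Lattices are median graphs (the median is taken coordinatewise) and embed isometrically in
  themselves.\<close>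

lemma walk_single [simp]: "walk V E [x] \<longleftrightarrow> x \<in> V"
  by (simp add: walk_def)

lemma walk_Cons_Cons [simp]:
  "walk V E (x # y # ys) \<longleftrightarrow> x \<in> V \<and> (x, y) \<in> E \<and> walk V E (y # ys)"
proof
  assume "walk V E (x # y # ys)"
  then show "x \<in> V \<and> (x, y) \<in> E \<and> walk V E (y # ys)"
    unfolding walk_def by (auto dest: spec[of _ "Suc _"] spec[of _ 0])
next
  assume h: "x \<in> V \<and> (x, y) \<in> E \<and> walk V E (y # ys)"
  show "walk V E (x # y # ys)" unfolding walk_def
  proof (intro conjI allI impI)
    fix i assume "Suc i < length (x # y # ys)"
    then show "((x # y # ys) ! i, (x # y # ys) ! Suc i) \<in> E"
      using h unfolding walk_def by (cases i) auto
  qed (use h in \<open>auto simp: walk_def\<close>)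
qed

lemma walk_nonempty: "walk V E xs \<Longrightarrow> xs \<noteq> []"
  by (simp add: walk_def)

lemma walk_set: "walk V E xs \<Longrightarrow> set xs \<subseteq> V"
  by (simp add: walk_def)

lemma walk_appendD:
  "walk V E (xs @ ys) \<Longrightarrow> xs \<noteq> [] \<Longrightarrow> ys \<noteq> [] \<Longrightarrow> walk V E xs \<and> walk V E ys"
proof (induction xs)
  case (Cons x xs)
  then show ?case by (cases xs; cases ys) auto
qed simp

lemma walk_split_at:
  assumes "walk V E (as @ w # bs)"
  shows "walk V E (as @ [w])" and "walk V E (w # bs)"
  using assms walk_set[OF assms] walk_appendD[of V E "as @ [w]" bs] walk_appendD[of V E as "w # bs"]
  by (cases "bs = []"; cases "as = []"; simp)+

lemma walk_join:
  "walk V E xs \<Longrightarrow> walk V E ys \<Longrightarrow> last xs = hd ys \<Longrightarrow> walk V E (xs @ tl ys)"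
proof (induction xs)
  case Nil then show ?case by (simp add: walk_def)
next
  case (Cons x xs)
  show ?case
  proof (cases xs)
    case Nil
    then show ?thesis using Cons.prems by (cases ys) (auto simp: walk_def)
  next
    case (Cons x' xs')
    then show ?thesis using Cons.prems Cons.IH by auto
  qed
qed

lemma walk_of_len_split:
  assumes "walk_of_len V E x y n (as @ w # bs)"
  shows "walk_of_len V E x w (length as) (as @ [w])" and "walk_of_len V E w y (length bs) (w # bs)"
  using assms walk_split_at[of V E as w bs] by (auto simp: walk_of_len_def hd_append)

lemma walk_of_len_join:
  assumes p: "walk_of_len V E x w m p" and q: "walk_of_len V E w y n q"
  shows "walk_of_len V E x y (m + n) (p @ tl q)"
proof -
  have "p \<noteq> []" "q \<noteq> []" using p q by (auto simp: walk_of_len_def walk_def)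
  then have "q = w # tl q" using q by (metis list.collapse walk_of_len_def)
  moreover have "last (p @ tl q) = y"
  proof (cases "tl q = []")
    case True
    then show ?thesis using p q \<open>q = w # tl q\<close> by (metis append_Nil2 last_ConsL walk_of_len_def)
  next
    case False
    then show ?thesis using q \<open>q = w # tl q\<close> by (metis last_ConsR last_appendR walk_of_len_def)
  qed
  ultimately show ?thesis
    using p q walk_join[of V E p q] \<open>p \<noteq> []\<close> by (auto simp: walk_of_len_def)
qed

lemma interval_subset: "interval V E u v \<subseteq> V"
  unfolding interval_def walk_of_len_def using walk_set by fastforce

subsection \<open>Relabelling a graph along an injection\<close>

lemma walk_image:
  assumes "walk V E xs" "E \<subseteq> V \<times> V"
  shows "walk (f ` V) (map_prod f f ` E) (map f xs)"
  using assms unfolding walk_def by (auto intro!: imageI)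

lemma walk_image_obtain:
  assumes "walk (f ` V) (map_prod f f ` E) ys" "inj_on f V" "E \<subseteq> V \<times> V"
  obtains xs where "ys = map f xs" "walk V E xs"
proof
  let ?g = "inv_into V f"
  have ys: "set ys \<subseteq> f ` V" using assms(1) by (simp add: walk_def)
  show "ys = map f (map ?g ys)"
    unfolding map_map by (rule map_idI [symmetric]) (use ys in \<open>auto simp: f_inv_into_f\<close>)
  show "walk V E (map ?g ys)"
    unfolding walk_def
  proof (intro conjI allI impI)
    show "map ?g ys \<noteq> []" using assms(1) by (simp add: walk_def)
    show "set (map ?g ys) \<subseteq> V" using ys by (auto intro: inv_into_into)
    fix i assume i: "Suc i < length (map ?g ys)"
    then have "(ys ! i, ys ! Suc i) \<in> map_prod f f ` E" using assms(1) by (simp add: walk_def)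
    then obtain a b where ab: "(a, b) \<in> E" "ys ! i = f a" "ys ! Suc i = f b" by auto
    moreover have "a \<in> V" "b \<in> V" using ab assms(3) by auto
    ultimately show "(map ?g ys ! i, map ?g ys ! Suc i) \<in> E"
      using i assms(2) by (simp add: inv_into_f_f)
  qed
qed

context
  fixes V :: "'a set" and E and f :: "'a \<Rightarrow> 'b"
  assumes inj: "inj_on f V" and E_sub: "E \<subseteq> V \<times> V"
begin

lemma walk_of_len_image_iff:
  assumes "u \<in> V" "v \<in> V"
  shows "walk_of_len (f ` V) (map_prod f f ` E) (f u) (f v) n ys \<longleftrightarrow>
         (\<exists>xs. walk_of_len V E u v n xs \<and> ys = map f xs)"
proof
  assume h: "walk_of_len (f ` V) (map_prod f f ` E) (f u) (f v) n ys"
  then obtain xs where xs: "ys = map f xs" "walk V E xs"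
    using walk_image_obtain[OF _ inj E_sub] unfolding walk_of_len_def by blast
  have ne: "xs \<noteq> []" using xs walk_nonempty by blast
  have "hd xs \<in> V" "last xs \<in> V" using walk_set[OF xs(2)] ne by auto
  moreover have "f (hd xs) = f u" "f (last xs) = f v"
    using h xs ne by (auto simp: walk_of_len_def hd_map last_map)
  ultimately have "hd xs = u" "last xs = v" using inj assms by (auto dest: inj_onD)
  then show "\<exists>xs. walk_of_len V E u v n xs \<and> ys = map f xs"
    using xs h by (auto simp: walk_of_len_def)
next
  assume "\<exists>xs. walk_of_len V E u v n xs \<and> ys = map f xs"
  then obtain xs where "walk_of_len V E u v n xs" "ys = map f xs" by blast
  then show "walk_of_len (f ` V) (map_prod f f ` E) (f u) (f v) n ys"
    using walk_image[OF _ E_sub, of xs f] walk_nonempty[of V E xs]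
    by (auto simp: walk_of_len_def hd_map last_map)
qed

lemma gdist_image:
  assumes "u \<in> V" "v \<in> V"
  shows "gdist (f ` V) (map_prod f f ` E) (f u) (f v) = gdist V E u v"
  unfolding gdist_def using walk_of_len_image_iff[OF assms] by metis

lemma interval_image:
  assumes "u \<in> V" "v \<in> V"
  shows "interval (f ` V) (map_prod f f ` E) (f u) (f v) = f ` interval V E u v"
proof -
  have "interval (f ` V) (map_prod f f ` E) (f u) (f v) =
      {w. \<exists>xs. walk_of_len V E u v (gdist V E u v) xs \<and> w \<in> f ` set xs}"
    unfolding interval_def gdist_image[OF assms] walk_of_len_image_iff[OF assms] by auto
  then show ?thesis unfolding interval_def by blast
qed

lemma convex_set_image:
  assumes "convex_set V E S"
  shows "convex_set (f ` V) (map_prod f f ` E) (f ` S)"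
  unfolding convex_set_def
proof (intro conjI ballI)
  show "f ` S \<subseteq> f ` V" using assms by (auto simp: convex_set_def)
  fix a b assume "a \<in> f ` S" "b \<in> f ` S"
  then obtain u v where uv: "u \<in> S" "v \<in> S" "a = f u" "b = f v" by auto
  have "u \<in> V" "v \<in> V" using uv assms by (auto simp: convex_set_def)
  then show "interval (f ` V) (map_prod f f ` E) a b \<subseteq> f ` S"
    using uv assms by (auto simp: interval_image convex_set_def) (meson imageI subsetD)
qed

lemma connected_graph_image:
  assumes "connected_graph V E"
  shows "connected_graph (f ` V) (map_prod f f ` E)"
  unfolding connected_graph_def
proof (intro conjI ballI)
  show "f ` V \<noteq> {}" using assms by (simp add: connected_graph_def)
  fix a b assume "a \<in> f ` V" "b \<in> f ` V"
  then obtain u v where uv: "u \<in> V" "v \<in> V" "a = f u" "b = f v" by auto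
  then obtain n xs where "walk_of_len V E u v n xs"
    using assms unfolding connected_graph_def by blast
  then show "\<exists>n xs. walk_of_len (f ` V) (map_prod f f ` E) a b n xs"
    using walk_of_len_image_iff[OF uv(1,2)] uv by blast
qed

lemma median_graph_image:
  assumes "median_graph V E"
  shows "median_graph (f ` V) (map_prod f f ` E)"
  unfolding median_graph_def
proof (intro conjI ballI)
  show "connected_graph (f ` V) (map_prod f f ` E)"
    using assms connected_graph_image unfolding median_graph_def by blast
  fix a b c assume "a \<in> f ` V" "b \<in> f ` V" "c \<in> f ` V"
  then obtain u v w where uvw: "u \<in> V" "v \<in> V" "w \<in> V" "a = f u" "b = f v" "c = f w" by auto
  let ?I = "interval V E" and ?I' = "interval (f ` V) (map_prod f f ` E)"
  have "f ` (?I u v \<inter> ?I v w \<inter> ?I w u) = f ` (?I u v \<inter> ?I v w) \<inter> f ` ?I w u"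
    by (rule inj_on_image_Int[OF inj]) (use interval_subset[of V E] in blast)+
  also have "f ` (?I u v \<inter> ?I v w) = f ` ?I u v \<inter> f ` ?I v w"
    by (rule inj_on_image_Int[OF inj]) (use interval_subset[of V E] in blast)+
  finally have "?I' a b \<inter> ?I' b c \<inter> ?I' c a = f ` (?I u v \<inter> ?I v w \<inter> ?I w u)"
    unfolding uvw(4-6) interval_image[OF uvw(1,2)] interval_image[OF uvw(2,3)]
      interval_image[OF uvw(3,1)] by simp
  moreover have "inj_on f (?I u v \<inter> ?I v w \<inter> ?I w u)"
    by (rule inj_on_subset[OF inj]) (use interval_subset[of V E] in blast)
  moreover have "card (?I u v \<inter> ?I v w \<inter> ?I w u) = 1"
    using assms uvw(1-3) unfolding median_graph_def by blast
  ultimately show "card (?I' a b \<inter> ?I' b c \<inter> ?I' c a) = 1"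
    by (simp add: card_image)
qed

lemma graph_image:
  assumes "graph V E"
  shows "graph (f ` V) (map_prod f f ` E)"
  unfolding graph_def
proof (intro conjI allI)
  show "finite (f ` V)" using assms by (simp add: graph_def)
  show "map_prod f f ` E \<subseteq> f ` V \<times> f ` V" using E_sub by auto
  show "sym (map_prod f f ` E)" using assms unfolding graph_def sym_def by auto
  fix x show "(x, x) \<notin> map_prod f f ` E"
  proof
    assume "(x, x) \<in> map_prod f f ` E"
    then obtain a b where "(a, b) \<in> E" "f a = x" "f b = x" by auto
    moreover from this have "a = b" using E_sub inj by (auto dest: inj_onD)
    ultimately show False using assms by (auto simp: graph_def)
  qed
qed

end

subsection \<open>Geometry of lattices\<close>

definition absdiff :: "nat \<Rightarrow> nat \<Rightarrow> nat" where
  "absdiff a b = a - b + (b - a)"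

definition l1_dist :: "nat list \<Rightarrow> nat list \<Rightarrow> nat list \<Rightarrow> nat" where
  "l1_dist ns x y = (\<Sum>j<length ns. absdiff (x ! j) (y ! j))"

lemma absdiff_split_iff: "absdiff a w + absdiff w b = absdiff a b \<longleftrightarrow> min a b \<le> w \<and> w \<le> max a b"
  by (auto simp: absdiff_def)

lemma l1_dist_triangle: "l1_dist ns x z \<le> l1_dist ns x y + l1_dist ns y z"
  unfolding l1_dist_def sum.distrib[symmetric] by (rule sum_mono) (simp add: absdiff_def)

lemma l1_dist_self [simp]: "l1_dist ns x x = 0"
  by (simp add: l1_dist_def absdiff_def)

lemma lattice_V_eqI:
  assumes "x \<in> lattice_V ns" "y \<in> lattice_V ns" "\<forall>j<length ns. x ! j = y ! j"
  shows "x = y"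
  using assms by (intro nth_equalityI) (auto simp: lattice_V_def)

lemma l1_dist_eq_0:
  assumes "x \<in> lattice_V ns" "y \<in> lattice_V ns" "l1_dist ns x y = 0"
  shows "x = y"
proof (rule lattice_V_eqI[OF assms(1,2)], intro allI impI)
  fix j assume "j < length ns"
  then have "absdiff (x ! j) (y ! j) = 0" using assms(3) unfolding l1_dist_def by simp
  then show "x ! j = y ! j" by (simp add: absdiff_def)
qed

lemma sum_lessThan_differ_at:
  fixes f g :: "nat \<Rightarrow> nat"
  assumes "j < n" "\<forall>l<n. l \<noteq> j \<longrightarrow> f l = g l"
  shows "(\<Sum>l<n. f l) + g j = (\<Sum>l<n. g l) + f j"
proof -
  have "(\<Sum>l\<in>{..<n} - {j}. f l) = (\<Sum>l\<in>{..<n} - {j}. g l)"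
    using assms(2) by (intro sum.cong) auto
  then show ?thesis using assms(1) by (simp add: sum.remove)
qed

lemma lattice_E_l1_dist:
  assumes "(x, y) \<in> lattice_E ns"
  shows "l1_dist ns x y = 1"
proof -
  obtain j where j: "j < length ns" "x ! j + 1 = y ! j \<or> y ! j + 1 = x ! j"
     "\<forall>l<length ns. l \<noteq> j \<longrightarrow> x ! l = y ! l"
    using assms unfolding lattice_E_def by auto
  have "(\<Sum>l<length ns. absdiff (x ! l) (y ! l)) + 0 = (\<Sum>l<length ns. 0) + absdiff (x ! j) (y ! j)"
    using sum_lessThan_differ_at[OF j(1), of "\<lambda>l. absdiff (x ! l) (y ! l)" "\<lambda>l. 0"] j(3)
    by (simp add: absdiff_def)
  then show ?thesis using j(2) unfolding l1_dist_def absdiff_def by auto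
qed

lemma l1_dist_hd_last_le:
  "walk (lattice_V ns) (lattice_E ns) xs \<Longrightarrow> l1_dist ns (hd xs) (last xs) \<le> length xs - 1"
proof (induction xs)
  case (Cons x xs)
  show ?case
  proof (cases xs)
    case (Cons y ys)
    then have e: "(x, y) \<in> lattice_E ns" and w: "walk (lattice_V ns) (lattice_E ns) xs"
      using Cons.prems by auto
    have "l1_dist ns x (last xs) \<le> l1_dist ns x y + l1_dist ns y (last xs)" by (rule l1_dist_triangle)
    also have "\<dots> \<le> 1 + (length xs - 1)" using lattice_E_l1_dist[OF e] Cons.IH[OF w] Cons by simp
    finally show ?thesis using Cons by simp
  qed simp
qed (simp add: walk_def)

lemma lattice_step_towards:
  assumes x: "x \<in> lattice_V ns" and y: "y \<in> lattice_V ns" and "x \<noteq> y"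
  obtains x' where "(x, x') \<in> lattice_E ns" "x' \<in> lattice_V ns" "l1_dist ns x' y + 1 = l1_dist ns x y"
proof -
  obtain j where j: "j < length ns" "x ! j \<noteq> y ! j" using lattice_V_eqI[OF x y] \<open>x \<noteq> y\<close> by blast
  define c where "c = (if x ! j < y ! j then x ! j + 1 else x ! j - 1)"
  define x' where "x' = x[j := c]"
  have len: "length x = length ns" using x by (simp add: lattice_V_def)
  have "x ! j < ns ! j" "y ! j < ns ! j" using x y j by (auto simp: lattice_V_def)
  then have "c < ns ! j" by (auto simp: c_def)
  then have x'L: "x' \<in> lattice_V ns"
    using x len j(1) by (auto simp: lattice_V_def x'_def) (metis nth_list_update_eq nth_list_update_neq)
  have x'_nth: "\<forall>l<length ns. l \<noteq> j \<longrightarrow> x' ! l = x ! l" "x' ! j = c"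
    using len j by (auto simp: x'_def)
  have "(x, x') \<in> lattice_E ns"
    unfolding lattice_E_def using x x'L j x'_nth
    by (auto simp: c_def intro!: exI[of _ j] split: if_splits)
  moreover have "(\<Sum>l<length ns. absdiff (x' ! l) (y ! l)) + absdiff (x ! j) (y ! j) =
        (\<Sum>l<length ns. absdiff (x ! l) (y ! l)) + absdiff (x' ! j) (y ! j)"
    by (rule sum_lessThan_differ_at[OF j(1)]) (use x'_nth in auto)
  moreover have "absdiff (x' ! j) (y ! j) + 1 = absdiff (x ! j) (y ! j)"
    using x'_nth(2) j(2) by (auto simp: c_def absdiff_def)
  ultimately have "l1_dist ns x' y + 1 = l1_dist ns x y" unfolding l1_dist_def by linarith
  with \<open>(x, x') \<in> lattice_E ns\<close> x'L show ?thesis by (rule that)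
qed

lemma lattice_geodesic:
  assumes "x \<in> lattice_V ns" "y \<in> lattice_V ns"
  shows "\<exists>xs. walk_of_len (lattice_V ns) (lattice_E ns) x y (l1_dist ns x y) xs"
  using assms
proof (induction "l1_dist ns x y" arbitrary: x)
  case 0
  then have "x = y" using l1_dist_eq_0 by metis
  then show ?case using 0 by (intro exI[of _ "[x]"]) (auto simp: walk_of_len_def)
next
  case (Suc m)
  then have "x \<noteq> y" by (metis l1_dist_self nat.simps(3))
  then obtain x' where x': "(x, x') \<in> lattice_E ns" "x' \<in> lattice_V ns"
      "l1_dist ns x' y + 1 = l1_dist ns x y"
    using lattice_step_towards Suc.prems by blast
  have edge: "walk_of_len (lattice_V ns) (lattice_E ns) x x' 1 [x, x']"
    using x' Suc.prems by (simp add: walk_of_len_def)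
  have "m = l1_dist ns x' y" using Suc.hyps(2) x'(3) by simp
  then obtain xs where "walk_of_len (lattice_V ns) (lattice_E ns) x' y (l1_dist ns x' y) xs"
    using Suc.hyps(1) x'(2) Suc.prems(2) by blast
  from walk_of_len_join[OF edge this] show ?case using x'(3) by (metis add.commute)
qed

lemma gdist_lattice:
  assumes "x \<in> lattice_V ns" "y \<in> lattice_V ns"
  shows "gdist (lattice_V ns) (lattice_E ns) x y = l1_dist ns x y"
  unfolding gdist_def
proof (rule Least_equality)
  show "\<exists>xs. walk_of_len (lattice_V ns) (lattice_E ns) x y (l1_dist ns x y) xs"
    by (rule lattice_geodesic[OF assms])
  fix m assume "\<exists>xs. walk_of_len (lattice_V ns) (lattice_E ns) x y m xs"
  then show "l1_dist ns x y \<le> m" using l1_dist_hd_last_le by (fastforce simp: walk_of_len_def)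
qed

lemma interval_lattice_l1:
  assumes x: "x \<in> lattice_V ns" and y: "y \<in> lattice_V ns"
  shows "interval (lattice_V ns) (lattice_E ns) x y =
         {w \<in> lattice_V ns. l1_dist ns x w + l1_dist ns w y = l1_dist ns x y}"
proof (intro set_eqI iffI)
  fix w assume "w \<in> interval (lattice_V ns) (lattice_E ns) x y"
  then obtain xs where xs: "walk_of_len (lattice_V ns) (lattice_E ns) x y (l1_dist ns x y) xs" "w \<in> set xs"
    unfolding interval_def gdist_lattice[OF x y] by blast
  then obtain as bs where "xs = as @ w # bs" by (meson split_list)
  with xs(1) have "l1_dist ns x w \<le> length as" "l1_dist ns w y \<le> length bs"
      "length as + length bs = l1_dist ns x y"
    using walk_of_len_split[of _ _ x y _ as w bs] l1_dist_hd_last_le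
    by (fastforce simp: walk_of_len_def)+
  moreover have "w \<in> lattice_V ns" using xs walk_set by (fastforce simp: walk_of_len_def)
  ultimately show "w \<in> {w \<in> lattice_V ns. l1_dist ns x w + l1_dist ns w y = l1_dist ns x y}"
    using l1_dist_triangle[of ns x y w] by simp
next
  fix w assume "w \<in> {w \<in> lattice_V ns. l1_dist ns x w + l1_dist ns w y = l1_dist ns x y}"
  then have w: "w \<in> lattice_V ns" and split: "l1_dist ns x w + l1_dist ns w y = l1_dist ns x y" by auto
  obtain p where p: "walk_of_len (lattice_V ns) (lattice_E ns) x w (l1_dist ns x w) p"
    using lattice_geodesic[OF x w] by blast
  obtain q where q: "walk_of_len (lattice_V ns) (lattice_E ns) w y (l1_dist ns w y) q"
    using lattice_geodesic[OF w y] by blast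
  have "w \<in> set (p @ tl q)" using p by (auto simp: walk_of_len_def walk_def)
  then show "w \<in> interval (lattice_V ns) (lattice_E ns) x y"
    unfolding interval_def gdist_lattice[OF x y] using walk_of_len_join[OF p q] split by auto
qed

lemma l1_dist_split_iff:
  "l1_dist ns x w + l1_dist ns w y = l1_dist ns x y \<longleftrightarrow>
     (\<forall>j<length ns. absdiff (x ! j) (w ! j) + absdiff (w ! j) (y ! j) = absdiff (x ! j) (y ! j))"
proof
  have le: "\<And>j. absdiff (x ! j) (y ! j) \<le> absdiff (x ! j) (w ! j) + absdiff (w ! j) (y ! j)"
    by (simp add: absdiff_def)
  assume "l1_dist ns x w + l1_dist ns w y = l1_dist ns x y"
  then have "(\<Sum>j<length ns. absdiff (x ! j) (w ! j) + absdiff (w ! j) (y ! j) - absdiff (x ! j) (y ! j)) = 0"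
    unfolding sum_subtractf_nat[OF le] by (simp add: l1_dist_def sum.distrib)
  then show "\<forall>j<length ns. absdiff (x ! j) (w ! j) + absdiff (w ! j) (y ! j) = absdiff (x ! j) (y ! j)"
    using le by (auto simp: le_antisym)
qed (simp add: l1_dist_def sum.distrib[symmetric])

lemma interval_lattice:
  assumes "x \<in> lattice_V ns" "y \<in> lattice_V ns"
  shows "interval (lattice_V ns) (lattice_E ns) x y =
         {w \<in> lattice_V ns. \<forall>j<length ns. min (x ! j) (y ! j) \<le> w ! j \<and> w ! j \<le> max (x ! j) (y ! j)}"
  unfolding interval_lattice_l1[OF assms] l1_dist_split_iff absdiff_split_iff by simp

lemma lattice_slice_convex:
  assumes "i < length ns"
  shows "convex_set (lattice_V ns) (lattice_E ns) {z \<in> lattice_V ns. z ! i = c}"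
  unfolding convex_set_def using assms by (auto simp: interval_lattice)

lemma lattice_graph: "graph (lattice_V ns) (lattice_E ns)"
  unfolding graph_def
proof (intro conjI allI)
  have "lattice_V ns \<subseteq> {xs. set xs \<subseteq> {..<Max (set ns)} \<and> length xs = length ns}"
    by (auto simp: lattice_V_def in_set_conv_nth) (meson List.finite_set Max_ge nth_mem less_le_trans)
  then show "finite (lattice_V ns)"
    by (rule finite_subset) (simp add: finite_lists_length_eq)
  show "lattice_E ns \<subseteq> lattice_V ns \<times> lattice_V ns" by (auto simp: lattice_E_def)
  show "sym (lattice_E ns)" unfolding sym_def lattice_E_def by fastforce
  fix x show "(x, x) \<notin> lattice_E ns" unfolding lattice_E_def by auto
qed

lemma lattice_connected:
  assumes "\<forall>j<length ns. ns ! j > 0"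
  shows "connected_graph (lattice_V ns) (lattice_E ns)"
proof -
  have "replicate (length ns) 0 \<in> lattice_V ns" using assms by (simp add: lattice_V_def)
  then show ?thesis unfolding connected_graph_def using lattice_geodesic by blast
qed

definition med3 :: "nat \<Rightarrow> nat \<Rightarrow> nat \<Rightarrow> nat" where
  "med3 a b c = max (min a b) (min (max a b) c)"

lemma between3_iff_med3:
  "(min a b \<le> z \<and> z \<le> max a b) \<and> (min b c \<le> z \<and> z \<le> max b c) \<and> (min c a \<le> z \<and> z \<le> max c a)
    \<longleftrightarrow> z = med3 a b c"
  by (auto simp: med3_def min_def max_def)

lemma lattice_median:
  assumes "\<forall>j<length ns. ns ! j > 0"
  shows "median_graph (lattice_V ns) (lattice_E ns)"
  unfolding median_graph_def
proof (intro conjI ballI)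
  show "connected_graph (lattice_V ns) (lattice_E ns)" by (rule lattice_connected[OF assms])
  fix u v w assume u: "u \<in> lattice_V ns" and v: "v \<in> lattice_V ns" and w: "w \<in> lattice_V ns"
  let ?I = "interval (lattice_V ns) (lattice_E ns)"
  define m where "m = map (\<lambda>j. med3 (u ! j) (v ! j) (w ! j)) [0..<length ns]"
  have m_nth: "\<And>j. j < length ns \<Longrightarrow> m ! j = med3 (u ! j) (v ! j) (w ! j)"
    by (simp add: m_def)
  have m: "m \<in> lattice_V ns"
    using u v w by (auto simp: lattice_V_def m_def med3_def min_def max_def)
  have box: "z \<in> ?I u v \<inter> ?I v w \<inter> ?I w u \<longleftrightarrow>
      z \<in> lattice_V ns \<and> (\<forall>j<length ns.
        (min (u ! j) (v ! j) \<le> z ! j \<and> z ! j \<le> max (u ! j) (v ! j)) \<and>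
        (min (v ! j) (w ! j) \<le> z ! j \<and> z ! j \<le> max (v ! j) (w ! j)) \<and>
        (min (w ! j) (u ! j) \<le> z ! j \<and> z ! j \<le> max (w ! j) (u ! j)))" for z
    unfolding interval_lattice[OF u v] interval_lattice[OF v w] interval_lattice[OF w u] by blast
  have "?I u v \<inter> ?I v w \<inter> ?I w u = {z \<in> lattice_V ns. \<forall>j<length ns. z ! j = m ! j}"
    by (intro set_eqI) (simp only: box between3_iff_med3 mem_Collect_eq, use m_nth in auto)
  also have "\<dots> = {m}" using m by (auto intro: lattice_V_eqI)
  finally show "card (?I u v \<inter> ?I v w \<inter> ?I w u) = 1" by simp
qed

text \<open>The host graph must live on the naturals: lattice points are encoded by to_nat, and
  from_nat is then an isometric embedding of the encoded lattice back into the lattice.\<close>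
lemma latticewidth_le_lattice_bags:
  fixes Y :: "nat list \<Rightarrow> 'a set"
  assumes pos: "\<forall>j<length ns. 0 < ns ! j"
    and bags: "\<forall>z\<in>lattice_V ns. Y z \<subseteq> V"
    and edges: "\<forall>(u, v)\<in>E. \<exists>z\<in>lattice_V ns. u \<in> Y z \<and> v \<in> Y z"
    and vertices: "\<forall>v\<in>V. {z \<in> lattice_V ns. v \<in> Y z} \<noteq> {} \<and>
                     convex_set (lattice_V ns) (lattice_E ns) {z \<in> lattice_V ns. v \<in> Y z}"
    and width: "\<forall>z\<in>lattice_V ns. card (Y z) \<le> w"
  shows "latticewidth (length ns) V E \<le> w"
proof -
  let ?L = "lattice_V ns" and ?LE = "lattice_E ns"
  define VM :: "nat set" where "VM = to_nat ` ?L"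
  define EM where "EM = map_prod to_nat to_nat ` ?LE"
  define X where "X a = Y (from_nat a)" for a
  have inj: "inj_on (to_nat :: nat list \<Rightarrow> nat) ?L" by simp
  have LE: "?LE \<subseteq> ?L \<times> ?L" using lattice_graph[of ns] by (simp add: graph_def)
  have slice: "{a \<in> VM. v \<in> X a} = to_nat ` {z \<in> ?L. v \<in> Y z}" for v
    by (auto simp: VM_def X_def)
  have "median_decomposition V E VM EM X"
    unfolding median_decomposition_def
  proof (intro conjI)
    show "graph VM EM"
      unfolding VM_def EM_def by (rule graph_image[OF inj LE lattice_graph])
    show "median_graph VM EM"
      unfolding VM_def EM_def by (rule median_graph_image[OF inj LE lattice_median[OF pos]])
    show "\<forall>a\<in>VM. X a \<subseteq> V" using bags by (auto simp: VM_def X_def)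
    show "\<forall>(u, v)\<in>E. \<exists>a\<in>VM. u \<in> X a \<and> v \<in> X a" using edges by (fastforce simp: VM_def X_def)
    show "\<forall>v\<in>V. {a \<in> VM. v \<in> X a} \<noteq> {} \<and> convex_set VM EM {a \<in> VM. v \<in> X a}"
      unfolding slice unfolding VM_def EM_def using vertices convex_set_image[OF inj LE] by blast
  qed
  moreover have "lattice_dim_le VM EM (length ns)"
    unfolding lattice_dim_le_def embeds_in_lattice_def isometric_embedding_lattice_def
  proof (intro exI conjI ballI)
    show "from_nat ` VM \<subseteq> ?L" by (auto simp: VM_def)
    fix a b assume "a \<in> VM" "b \<in> VM"
    then obtain x y where "x \<in> ?L" "y \<in> ?L" "a = to_nat x" "b = to_nat y" by (auto simp: VM_def)
    then show "gdist ?L ?LE (from_nat a) (from_nat b) = gdist VM EM a b"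
      using gdist_image[OF inj LE] by (simp add: VM_def EM_def)
  qed (use pos in auto)
  moreover have "decomp_width VM X \<le> w"
  proof -
    have "finite VM" using lattice_graph[of ns] by (simp add: VM_def graph_def)
    moreover have "VM \<noteq> {}" using lattice_connected[OF pos] by (simp add: VM_def connected_graph_def)
    ultimately show ?thesis using width by (auto simp: decomp_width_def VM_def X_def)
  qed
  ultimately have "latticewidth (length ns) V E \<le> decomp_width VM X"
    unfolding latticewidth_def Inf_nat_def by (blast intro: Least_le)
  with \<open>decomp_width VM X \<le> w\<close> show ?thesis by linarith
qed

lemma latticewidth_le_colours:
  assumes finite: "finite V" and E_sub: "E \<subseteq> V \<times> V"
    and colours: "c ` V \<subseteq> {..<k}" and proper: "\<forall>(u, v)\<in>E. c u \<noteq> c v"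
  shows "latticewidth k V E \<le> k"
proof -
  define C where "C i = {v \<in> V. c v = i}" for i
  have "\<forall>i. \<exists>num. bij_betw num (C i) {0..<card (C i)}"
    using finite by (auto simp: C_def intro!: ex_bij_betw_finite_nat)
  then obtain num where num: "\<And>i. bij_betw (num i) (C i) {0..<card (C i)}" by metis
  define idx where "idx v = num (c v) v" for v
  have idx_lt: "idx v < card (C (c v))" if "v \<in> V" for v
    using num[of "c v"] that by (auto simp: bij_betw_def idx_def C_def)
  have idx_inj: "u = v" if "u \<in> V" "v \<in> V" "c u = c v" "idx u = idx v" for u v
    using num[of "c v"] that unfolding bij_betw_def idx_def C_def by (auto dest: inj_onD)
  have c_lt: "c v < k" if "v \<in> V" for v using colours that by auto
  define ns where "ns = map (\<lambda>i. max 1 (card (C i))) [0..<k]"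
    \<comment> \<open>empty colour classes get a one-vertex path, since lattice factors are nonempty\<close>
  have len: "length ns = k" by (simp add: ns_def)
  have ns_nth: "ns ! i = max 1 (card (C i))" if "i < k" for i using that by (simp add: ns_def)
  have pos: "\<forall>j<length ns. 0 < ns ! j" using ns_nth len by (simp add: less_max_iff_disj)
  define Y where "Y z = {v \<in> V. z ! c v = idx v}" for z :: "nat list"
  define pt where "pt u v = (replicate k 0)[c u := idx u, c v := idx v]" for u v
  have pt: "pt u v \<in> lattice_V ns" "u \<in> Y (pt u v) \<or> c u = c v" "v \<in> Y (pt u v)"
    if "u \<in> V" "v \<in> V" for u v
  proof -
    have "idx u < ns ! c u" "idx v < ns ! c v"
      using idx_lt that ns_nth c_lt by fastforce+
    then show "pt u v \<in> lattice_V ns"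
      using len pos that c_lt by (auto simp: pt_def lattice_V_def nth_list_update)
    show "u \<in> Y (pt u v) \<or> c u = c v" "v \<in> Y (pt u v)"
      using that c_lt by (auto simp: pt_def Y_def nth_list_update)
  qed
  have "latticewidth (length ns) V E \<le> k"
  proof (rule latticewidth_le_lattice_bags[OF pos])
    show "\<forall>z\<in>lattice_V ns. Y z \<subseteq> V" by (auto simp: Y_def)
    show "\<forall>(u, v)\<in>E. \<exists>z\<in>lattice_V ns. u \<in> Y z \<and> v \<in> Y z"
    proof clarify
      fix u v assume "(u, v) \<in> E"
      then have "u \<in> V" "v \<in> V" "c u \<noteq> c v" using E_sub proper by auto
      then show "\<exists>z\<in>lattice_V ns. u \<in> Y z \<and> v \<in> Y z" using pt[of u v] by blast
    qed
    show "\<forall>v\<in>V. {z \<in> lattice_V ns. v \<in> Y z} \<noteq> {} \<and>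
                convex_set (lattice_V ns) (lattice_E ns) {z \<in> lattice_V ns. v \<in> Y z}"
    proof
      fix v assume v: "v \<in> V"
      then have "{z \<in> lattice_V ns. v \<in> Y z} = {z \<in> lattice_V ns. z ! c v = idx v}"
        by (auto simp: Y_def)
      then show "{z \<in> lattice_V ns. v \<in> Y z} \<noteq> {} \<and>
                 convex_set (lattice_V ns) (lattice_E ns) {z \<in> lattice_V ns. v \<in> Y z}"
        using pt[OF v v] lattice_slice_convex[of "c v" ns "idx v"] c_lt[OF v] len by auto
    qed
    show "\<forall>z\<in>lattice_V ns. card (Y z) \<le> k"
    proof
      fix z
      have "inj_on c (Y z)" using idx_inj by (auto simp: inj_on_def Y_def)
      moreover have "c ` Y z \<subseteq> {..<k}" using colours by (auto simp: Y_def)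
      ultimately show "card (Y z) \<le> k" using card_inj_on_le[of c "Y z" "{..<k}"] by simp
    qed
  qed
  then show ?thesis by (simp add: len)
qed

lemma chromatic_number_colouring:
  assumes "graph V E"
  obtains c where "c ` V \<subseteq> {..<chromatic_number V E}" "\<forall>(u, v)\<in>E. c u \<noteq> c v"
proof -
  have "finite V" "E \<subseteq> V \<times> V" "\<And>x. (x, x) \<notin> E" using assms by (auto simp: graph_def)
  then obtain num where num: "bij_betw num V {0..<card V}" using ex_bij_betw_finite_nat by blast
  then have "num ` V \<subseteq> {..<card V}" by (auto simp: bij_betw_def)
  moreover have "\<forall>(u, v)\<in>E. num u \<noteq> num v"
    using num \<open>E \<subseteq> V \<times> V\<close> \<open>\<And>x. (x, x) \<notin> E\<close> by (fastforce simp: bij_betw_def dest: inj_onD)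
  ultimately have "\<exists>c. c ` V \<subseteq> {..<card V} \<and> (\<forall>(u, v)\<in>E. c u \<noteq> c v)" by blast
  then have "\<exists>c. c ` V \<subseteq> {..<chromatic_number V E} \<and> (\<forall>(u, v)\<in>E. c u \<noteq> c v)"
    unfolding chromatic_number_def by (rule LeastI)
  then show ?thesis using that by blast
qed

theorem mainTheorem1:
  fixes V :: "'a set" and E :: "('a \<times> 'a) set"
  assumes "graph V E"
  shows "latticewidth (chromatic_number V E) V E \<le> chromatic_number V E"
proof -
  obtain c where "c ` V \<subseteq> {..<chromatic_number V E}" "\<forall>(u, v)\<in>E. c u \<noteq> c v"
    using chromatic_number_colouring[OF assms] .
  moreover have "finite V" "E \<subseteq> V \<times> V" using assms by (auto simp: graph_def)
  ultimately show ?thesis by (rule latticewidth_le_colours[rotated 2])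
qed

end
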